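(* Let $A$ be the weighted shift on $\mathcal{H}$ with weights $\{1/n\}_{n\ge1}$. If $r_1>r_2\ge0$, then $\|(z-r_1A)^{-1}\|\ge\|(z-r_2A)^{-1}\|$ for every complex $z\neq0$.
   Context: $\mathcal{H}$ is a separable infinite-dimensional complex Hilbert space with orthonormal basis $\{e_n\}_{n=0}^\infty$, and $A$ is defined by $Ae_n=\frac{1}{n+1}e_{n+1}$ for $n\ge0$. $A$ is quasinilpotent. *)

theory Defs
  imports "HOL-Analysis.Analysis"
begin

text \<open>Concrete model of the separable Hilbert space H = l2(N) over the complex numbers,
  with e_n the n-th standard unit sequence.\<close>

definition l2 :: "(nat \<Rightarrow> complex) set" where
  "l2 = {x. summable (\<lambda>n. (cmod (x n))\<^sup>2)}"

definition l2norm :: "(nat \<Rightarrow> complex) \<Rightarrow> real" where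
  "l2norm x = sqrt (\<Sum>n. (cmod (x n))\<^sup>2)"

text \<open>Weighted shift: A e_n = e_(n+1) / (n+1), i.e. (A x)_0 = 0, (A x)_m = x_(m-1) / m.\<close>

definition shiftA :: "(nat \<Rightarrow> complex) \<Rightarrow> nat \<Rightarrow> complex" where
  "shiftA x m = (if m = 0 then 0 else x (m - 1) / of_nat m)"

definition zmrA :: "complex \<Rightarrow> real \<Rightarrow> (nat \<Rightarrow> complex) \<Rightarrow> nat \<Rightarrow> complex" where
  "zmrA z r x n = z * x n - complex_of_real r * shiftA x n"

text \<open>The inverse (z - r A)^(-1) on l2: the unique preimage in l2 (set to 0 outside l2).\<close>

definition resolvent :: "complex \<Rightarrow> real \<Rightarrow> (nat \<Rightarrow> complex) \<Rightarrow> nat \<Rightarrow> complex" where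
  "resolvent z r x = (if x \<in> l2 then (THE y. y \<in> l2 \<and> zmrA z r y = x) else (\<lambda>_. 0))"

definition opnorm :: "((nat \<Rightarrow> complex) \<Rightarrow> nat \<Rightarrow> complex) \<Rightarrow> real" where
  "opnorm T = Sup {l2norm (T x) | x. x \<in> l2 \<and> l2norm x \<le> 1}"

end

theory Submission
  imports Defs
begin

text \<open>Since \<open>A\<close> is quasinilpotent, \<open>(z - r A)\<^sup>-\<^sup>1\<close> is its Neumann series, a lower
  triangular matrix whose entries have modulus \<open>r^(n-j) j! / (n! |z|^(n-j+1))\<close>, increasing
  in \<open>r\<close>. So \<open>(z - r\<^sub>2 A)\<^sup>-\<^sup>1 x\<close> is dominated entrywise by \<open>(z - r\<^sub>1 A)\<^sup>-\<^sup>1\<close> applied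
  to \<open>|x|\<close>, and rotating the phase of \<open>x\<^sub>j\<close> by \<open>sgn z^j\<close> gives a vector \<open>x'\<close> of the same
  norm for which all terms of \<open>((z - r\<^sub>1 A)\<^sup>-\<^sup>1 x')\<^sub>n\<close> have the same phase, so that this
  majorant is attained. The supremum defining the operator norm is finite by Young's
  inequality for the \<open>l\<^sup>1\<close> kernel \<open>(r/|z|)^k / (k! |z|)\<close>.\<close>

lemma l2_convolution_bound:
  fixes c d :: "nat \<Rightarrow> real"
  assumes c_nonneg: "\<And>k. 0 \<le> c k" and c: "summable c" and d: "summable (\<lambda>j. (d j)\<^sup>2)"
  shows "summable (\<lambda>n. (\<Sum>j\<le>n. c (n - j) * d j)\<^sup>2)"
    and "(\<Sum>n. (\<Sum>j\<le>n. c (n - j) * d j)\<^sup>2) \<le> (\<Sum>k. c k)\<^sup>2 * (\<Sum>j. (d j)\<^sup>2)"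
proof -
  define C where "C = (\<Sum>k. c k)"
  define D where "D = (\<Sum>j. (d j)\<^sup>2)"
  have c_partial: "(\<Sum>k\<in>K. c k) \<le> C" if "finite K" for K
    unfolding C_def using c that c_nonneg by (rule sum_le_suminf)
  have d_partial: "(\<Sum>j<N. (d j)\<^sup>2) \<le> D" for N
    unfolding D_def by (rule sum_le_suminf[OF d]) auto
  have "0 \<le> C"
    using c_partial[of "{}"] by simp
  have pointwise: "(\<Sum>j\<le>n. c (n - j) * d j)\<^sup>2 \<le> C * (\<Sum>j\<le>n. c (n - j) * (d j)\<^sup>2)" for n
  proof -
    have "(\<Sum>j\<le>n. c (n - j) * d j)
        = (\<Sum>j\<le>n. sqrt (c (n - j)) * (sqrt (c (n - j)) * d j))"
      by (rule sum.cong) (auto simp: c_nonneg mult.assoc[symmetric])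
    also have "(\<dots>)\<^sup>2
        \<le> (\<Sum>j\<le>n. (sqrt (c (n - j)))\<^sup>2) * (\<Sum>j\<le>n. (sqrt (c (n - j)) * d j)\<^sup>2)"
      by (rule Cauchy_Schwarz_ineq_sum)
    also have "\<dots> = (\<Sum>j\<le>n. c (n - j)) * (\<Sum>j\<le>n. c (n - j) * (d j)\<^sup>2)"
      by (simp add: c_nonneg power_mult_distrib)
    also have "(\<Sum>j\<le>n. c (n - j)) = (\<Sum>k\<in>(\<lambda>j. n - j) ` {..n}. c k)"
      by (subst sum.reindex) (auto simp: inj_on_def)
    also have "\<dots> \<le> C"
      by (simp add: c_partial)
    finally show ?thesis
      by (simp add: c_nonneg mult_right_mono sum_nonneg)
  qed
  have triangle: "(\<Sum>n<N. \<Sum>j\<le>n. c (n - j) * (d j)\<^sup>2) \<le> C * D" for N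
  proof -
    have "(\<Sum>n<N. \<Sum>j\<le>n. c (n - j) * (d j)\<^sup>2)
        = (\<Sum>(j, k)\<in>{(j, k). j + k < N}. c k * (d j)\<^sup>2)"
      by (simp add: sum.triangle_reindex)
    also have "\<dots> \<le> (\<Sum>(j, k)\<in>{..<N} \<times> {..<N}. c k * (d j)\<^sup>2)"
      by (rule sum_mono2) (auto simp: c_nonneg)
    also have "\<dots> = (\<Sum>j<N. (d j)\<^sup>2) * (\<Sum>k<N. c k)"
      unfolding sum_product sum.cartesian_product by (simp add: mult.commute split_def)
    also have "\<dots> \<le> D * C"
      using d_partial[of 0]
      by (intro mult_mono) (auto simp: c_partial d_partial c_nonneg intro!: sum_nonneg)
    finally show ?thesis
      by (simp add: mult.commute)
  qed
  have partial: "(\<Sum>n<N. (\<Sum>j\<le>n. c (n - j) * d j)\<^sup>2) \<le> C\<^sup>2 * D" for N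
  proof -
    have "(\<Sum>n<N. (\<Sum>j\<le>n. c (n - j) * d j)\<^sup>2)
        \<le> C * (\<Sum>n<N. \<Sum>j\<le>n. c (n - j) * (d j)\<^sup>2)"
      using sum_mono[OF pointwise, where K = "{..<N}"] by (simp add: sum_distrib_left)
    also have "\<dots> \<le> C * (C * D)"
      using triangle \<open>0 \<le> C\<close> by (rule mult_left_mono)
    finally show ?thesis
      by (simp add: power2_eq_square)
  qed
  show summable: "summable (\<lambda>n. (\<Sum>j\<le>n. c (n - j) * d j)\<^sup>2)"
    by (rule summableI_nonneg_bounded[where x = "C\<^sup>2 * D"]) (auto simp: partial)
  show "(\<Sum>n. (\<Sum>j\<le>n. c (n - j) * d j)\<^sup>2) \<le> (\<Sum>k. c k)\<^sup>2 * (\<Sum>j. (d j)\<^sup>2)"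
    using suminf_le_const[OF summable partial] by (simp add: C_def D_def)
qed

lemma l2_dominated:
  assumes le: "\<And>n. cmod (f n) \<le> Y n" and Y: "summable (\<lambda>n. (Y n)\<^sup>2)"
  shows "f \<in> l2" and "l2norm f \<le> sqrt (\<Sum>n. (Y n)\<^sup>2)"
proof -
  have le2: "(cmod (f n))\<^sup>2 \<le> (Y n)\<^sup>2" for n
    using le[of n] by (simp add: power_mono)
  have f: "summable (\<lambda>n. (cmod (f n))\<^sup>2)"
    by (rule summable_comparison_test'[OF Y, of 0]) (simp add: le2)
  then show "f \<in> l2"
    by (simp add: l2_def)
  show "l2norm f \<le> sqrt (\<Sum>n. (Y n)\<^sup>2)"
    unfolding l2norm_def using suminf_le[OF le2 f Y] by simp
qed

lemma l2norm_mono: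
  assumes "g \<in> l2" and "\<And>n. cmod (f n) \<le> cmod (g n)"
  shows "l2norm f \<le> l2norm g"
  using l2_dominated(2)[of f "\<lambda>n. cmod (g n)"] assms by (simp add: l2_def l2norm_def)

lemma opnorm_mono:
  assumes bounded: "\<And>x. x \<in> l2 \<Longrightarrow> l2norm x \<le> 1 \<Longrightarrow> l2norm (T' x) \<le> B"
    and dominated: "\<And>x. x \<in> l2 \<Longrightarrow> l2norm x \<le> 1 \<Longrightarrow>
      \<exists>x'\<in>l2. l2norm x' \<le> 1 \<and> l2norm (T x) \<le> l2norm (T' x')"
  shows "opnorm T \<le> opnorm T'"
  unfolding opnorm_def
proof (rule cSup_mono)
  have "(\<lambda>_. 0) \<in> l2" and "l2norm (\<lambda>_. 0) \<le> 1"
    by (simp_all add: l2_def l2norm_def)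
  then show "{l2norm (T x) |x. x \<in> l2 \<and> l2norm x \<le> 1} \<noteq> {}"
    by blast
  show "bdd_above {l2norm (T' x) |x. x \<in> l2 \<and> l2norm x \<le> 1}"
    using bounded by (auto intro!: bdd_aboveI)
  show "\<exists>a\<in>{l2norm (T' x) |x. x \<in> l2 \<and> l2norm x \<le> 1}. b \<le> a"
    if "b \<in> {l2norm (T x) |x. x \<in> l2 \<and> l2norm x \<le> 1}" for b
    using that dominated by blast
qed

text \<open>\<open>A^k e\<^sub>j = j!/(j+k)! e\<^sub>j\<^sub>+\<^sub>k\<close>, so these are the matrix entries of
  \<open>(\<Sum>k. r^k A^k / z^(k+1))\<close>.\<close>

definition resolvent_kernel :: "'a::real_normed_field \<Rightarrow> real \<Rightarrow> nat \<Rightarrow> nat \<Rightarrow> 'a" where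
  "resolvent_kernel z r n j = of_real (r ^ (n - j) * fact j / fact n) / z ^ (n - j + 1)"

definition resolvent_series :: "complex \<Rightarrow> real \<Rightarrow> (nat \<Rightarrow> complex) \<Rightarrow> nat \<Rightarrow> complex" where
  "resolvent_series z r x n = (\<Sum>j\<le>n. resolvent_kernel z r n j * x j)"

lemma resolvent_kernel_diag: "resolvent_kernel z r n n = 1 / z"
  by (simp add: resolvent_kernel_def)

lemma resolvent_kernel_Suc:
  assumes "j \<le> n"
  shows "z * resolvent_kernel z r (Suc n) j = of_real r * resolvent_kernel z r n j / of_nat (Suc n)"
proof -
  have "Suc n - j = Suc (n - j)"
    using assms by simp
  then show ?thesis
    by (cases "z = 0") (simp_all add: resolvent_kernel_def field_simps del: of_nat_Suc)
qed

lemma zmrA_resolvent_series: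
  assumes "z \<noteq> 0"
  shows "zmrA z r (resolvent_series z r x) = x"
proof
  fix n
  show "zmrA z r (resolvent_series z r x) n = x n"
  proof (cases n)
    case 0
    then show ?thesis
      using assms by (simp add: zmrA_def shiftA_def resolvent_series_def resolvent_kernel_diag)
  next
    case (Suc m)
    have "z * resolvent_series z r x (Suc m)
        = x (Suc m) + (\<Sum>j\<le>m. z * resolvent_kernel z r (Suc m) j * x j)"
      using assms
      by (simp add: resolvent_series_def resolvent_kernel_diag distrib_left sum_distrib_left
          mult.assoc add.commute)
    also have "(\<Sum>j\<le>m. z * resolvent_kernel z r (Suc m) j * x j)
        = of_real r * resolvent_series z r x m / of_nat (Suc m)"
      by (simp add: resolvent_series_def sum_distrib_left sum_divide_distrib resolvent_kernel_Suc
          mult.assoc del: of_nat_Suc)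
    finally show ?thesis
      using Suc by (simp add: zmrA_def shiftA_def del: of_nat_Suc)
  qed
qed

lemma zmrA_injective:
  assumes "z \<noteq> 0" and "zmrA z r y = zmrA z r y'"
  shows "y = y'"
proof
  fix n
  show "y n = y' n"
  proof (induction n)
    case 0
    show ?case
      using assms(1) fun_cong[OF assms(2), of 0] by (simp add: zmrA_def shiftA_def)
  next
    case (Suc n)
    show ?case
      using assms(1) Suc.IH fun_cong[OF assms(2), of "Suc n"] by (simp add: zmrA_def shiftA_def)
  qed
qed

lemma norm_resolvent_kernel:
  assumes "r \<ge> 0"
  shows "norm (resolvent_kernel z r n j) = resolvent_kernel (norm z) r n j"
  unfolding resolvent_kernel_def norm_divide norm_of_real norm_power using assms by simp

lemma resolvent_kernel_nonneg:
  fixes a :: real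
  assumes "a \<ge> 0" and "r \<ge> 0"
  shows "0 \<le> resolvent_kernel a r n j"
  using assms by (simp add: resolvent_kernel_def)

lemma resolvent_kernel_mono:
  fixes a :: real
  assumes "a \<ge> 0" and "0 \<le> r" and "r \<le> r'"
  shows "resolvent_kernel a r n j \<le> resolvent_kernel a r' n j"
  unfolding resolvent_kernel_def using assms
  by (auto intro!: divide_right_mono mult_right_mono power_mono)

lemma resolvent_kernel_le:
  fixes a :: real
  assumes "a \<ge> 0" and "r \<ge> 0" and "j \<le> n"
  shows "resolvent_kernel a r n j \<le> (r / a) ^ (n - j) / fact (n - j) / a"
proof -
  have "fact j * fact (n - j) \<le> (fact n :: nat)"
    using choose_dvd[OF \<open>j \<le> n\<close>] by (intro dvd_imp_le) auto
  then have "fact j * fact (n - j) \<le> (fact n :: real)"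
    by (metis of_nat_fact of_nat_le_iff of_nat_mult)
  then have "fact j / fact n \<le> 1 / (fact (n - j) :: real)"
    by (simp add: divide_simps)
  then have "r ^ (n - j) / a ^ (n - j + 1) * (fact j / fact n)
      \<le> r ^ (n - j) / a ^ (n - j + 1) * (1 / fact (n - j))"
    using assms by (intro mult_left_mono) auto
  then show ?thesis
    by (simp add: resolvent_kernel_def power_divide mult_ac)
qed

lemma resolvent_kernel_of_real_mult:
  "resolvent_kernel (of_real a * u) r n j = of_real (resolvent_kernel a r n j) / u ^ (n - j + 1)"
  by (simp add: resolvent_kernel_def power_mult_distrib divide_divide_eq_left)

lemma norm_resolvent_series_le:
  assumes "r \<ge> 0"
  shows "cmod (resolvent_series z r x n) \<le> (\<Sum>j\<le>n. resolvent_kernel (cmod z) r n j * cmod (x j))"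
  unfolding resolvent_series_def using assms
  by (intro order.trans[OF norm_sum] sum_mono) (simp add: norm_mult norm_resolvent_kernel)

lemma resolvent_series_l2:
  assumes "r \<ge> 0" and "x \<in> l2"
  shows "resolvent_series z r x \<in> l2"
    and "l2norm (resolvent_series z r x) \<le> exp (r / cmod z) / cmod z * l2norm x"
proof -
  define a where "a = cmod z"
  define c where "c k = (r / a) ^ k / fact k / a" for k
  have "(\<lambda>k. (r / a) ^ k / fact k) sums exp (r / a)"
    using exp_converges[of "r / a"] by (simp add: divide_inverse mult.commute)
  then have c_sums: "c sums (exp (r / a) / a)"
    unfolding c_def by (rule sums_divide)
  have c_nonneg: "0 \<le> c k" for k
    using assms by (simp add: c_def a_def)
  have x: "summable (\<lambda>j. (cmod (x j))\<^sup>2)"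
    using assms by (simp add: l2_def)
  have dominated: "cmod (resolvent_series z r x n) \<le> (\<Sum>j\<le>n. c (n - j) * cmod (x j))" for n
  proof -
    have "cmod (resolvent_series z r x n) \<le> (\<Sum>j\<le>n. resolvent_kernel a r n j * cmod (x j))"
      unfolding a_def by (rule norm_resolvent_series_le[OF \<open>r \<ge> 0\<close>])
    also have "\<dots> \<le> (\<Sum>j\<le>n. c (n - j) * cmod (x j))"
      using resolvent_kernel_le[of a r] assms
      by (intro sum_mono mult_right_mono) (simp_all add: c_def a_def)
    finally show ?thesis .
  qed
  note young = l2_convolution_bound[OF c_nonneg sums_summable[OF c_sums] x]
  show "resolvent_series z r x \<in> l2"
    by (rule l2_dominated(1)[OF dominated young(1)])
  have "l2norm (resolvent_series z r x) \<le> sqrt (\<Sum>n. (\<Sum>j\<le>n. c (n - j) * cmod (x j))\<^sup>2)"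
    by (rule l2_dominated(2)[OF dominated young(1)])
  also have "\<dots> \<le> sqrt ((exp (r / a) / a)\<^sup>2 * (\<Sum>j. (cmod (x j))\<^sup>2))"
    using young(2) by (simp add: sums_unique[OF c_sums, symmetric])
  also have "\<dots> = exp (r / a) / a * l2norm x"
    by (simp add: l2norm_def real_sqrt_mult a_def)
  finally show "l2norm (resolvent_series z r x) \<le> exp (r / cmod z) / cmod z * l2norm x"
    by (simp add: a_def)
qed

lemma resolvent_eq_resolvent_series:
  assumes "z \<noteq> 0" and "r \<ge> 0" and "x \<in> l2"
  shows "resolvent z r x = resolvent_series z r x"
  unfolding resolvent_def
proof (simp add: \<open>x \<in> l2\<close>, rule the_equality)
  show "resolvent_series z r x \<in> l2 \<and> zmrA z r (resolvent_series z r x) = x"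
    using assms by (simp add: resolvent_series_l2(1) zmrA_resolvent_series)
  show "y = resolvent_series z r x" if "y \<in> l2 \<and> zmrA z r y = x" for y
    using that zmrA_injective[OF \<open>z \<noteq> 0\<close>] zmrA_resolvent_series[OF \<open>z \<noteq> 0\<close>] by metis
qed

lemma l2norm_resolvent_le:
  assumes "z \<noteq> 0" and "r \<ge> 0" and "x \<in> l2"
  shows "l2norm (resolvent z r x) \<le> exp (r / cmod z) / cmod z * l2norm x"
  using resolvent_series_l2(2) resolvent_eq_resolvent_series assms by simp

lemma norm_resolvent_series_aligned:
  assumes "z \<noteq> 0" and "r \<ge> 0"
  shows "cmod (resolvent_series z r (\<lambda>j. of_real (cmod (x j)) / sgn z ^ j) n)
    = (\<Sum>j\<le>n. resolvent_kernel (cmod z) r n j * cmod (x j))"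
proof -
  have sgn: "sgn z \<noteq> 0" "cmod (sgn z) = 1"
    using assms by (simp_all add: sgn_zero_iff norm_sgn)
  have z: "z = of_real (cmod z) * sgn z"
    using assms by (simp add: sgn_div_norm scaleR_conv_of_real)
  have aligned: "resolvent_series z r (\<lambda>j. of_real (cmod (x j)) / sgn z ^ j) n
      = of_real (\<Sum>j\<le>n. resolvent_kernel (cmod z) r n j * cmod (x j)) / sgn z ^ (n + 1)"
    unfolding resolvent_series_def of_real_sum sum_divide_distrib
  proof (rule sum.cong)
    fix j
    assume "j \<in> {..n}"
    then have "sgn z ^ (n + 1) = sgn z ^ (n - j + 1) * sgn z ^ j"
      by (simp add: power_add[symmetric])
    then show "resolvent_kernel z r n j * (of_real (cmod (x j)) / sgn z ^ j)
        = of_real (resolvent_kernel (cmod z) r n j * cmod (x j)) / sgn z ^ (n + 1)"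
      using sgn by (subst z, subst resolvent_kernel_of_real_mult) simp
  qed simp
  have "0 \<le> (\<Sum>j\<le>n. resolvent_kernel (cmod z) r n j * cmod (x j))"
    using assms by (auto intro!: sum_nonneg mult_nonneg_nonneg resolvent_kernel_nonneg)
  then show ?thesis
    unfolding aligned norm_divide norm_power norm_of_real using sgn by simp
qed

lemma resolvent_dominated_by_aligned:
  assumes "z \<noteq> 0" and "0 \<le> r" and "r \<le> r'" and "x \<in> l2"
  obtains x' where "x' \<in> l2" and "l2norm x' = l2norm x"
    and "l2norm (resolvent z r x) \<le> l2norm (resolvent z r' x')"
proof -
  define x' where "x' j = of_real (cmod (x j)) / sgn z ^ j" for j
  have norm_x': "cmod (x' j) = cmod (x j)" for j
    using assms by (simp add: x'_def norm_divide norm_power norm_sgn)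
  have "x' \<in> l2"
    using \<open>x \<in> l2\<close> by (simp add: l2_def norm_x')
  moreover have "l2norm x' = l2norm x"
    by (simp add: l2norm_def norm_x')
  moreover have "l2norm (resolvent z r x) \<le> l2norm (resolvent z r' x')"
  proof (rule l2norm_mono)
    show "resolvent z r' x' \<in> l2"
      using assms \<open>x' \<in> l2\<close> by (simp add: resolvent_eq_resolvent_series resolvent_series_l2(1))
    fix n
    have "cmod (resolvent z r x n) \<le> (\<Sum>j\<le>n. resolvent_kernel (cmod z) r n j * cmod (x j))"
      using assms by (simp add: resolvent_eq_resolvent_series norm_resolvent_series_le)
    also have "\<dots> \<le> (\<Sum>j\<le>n. resolvent_kernel (cmod z) r' n j * cmod (x j))"
      using assms by (intro sum_mono mult_right_mono resolvent_kernel_mono) auto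
    also have "\<dots> = cmod (resolvent z r' x' n)"
      using assms \<open>x' \<in> l2\<close>
      by (simp add: resolvent_eq_resolvent_series norm_resolvent_series_aligned x'_def[abs_def])
    finally show "cmod (resolvent z r x n) \<le> cmod (resolvent z r' x' n)" .
  qed
  ultimately show ?thesis
    by (rule that)
qed

theorem lemma3p4:
  fixes r1 r2 :: real and z :: complex
  assumes "r1 > r2" and "r2 \<ge> 0" and "z \<noteq> 0"
  shows "opnorm (resolvent z r1) \<ge> opnorm (resolvent z r2)"
proof (rule opnorm_mono)
  have "r1 \<ge> 0"
    using assms by linarith
  fix x
  assume x: "x \<in> l2" "l2norm x \<le> 1"
  have "l2norm (resolvent z r1 x) \<le> exp (r1 / cmod z) / cmod z * l2norm x"
    using \<open>z \<noteq> 0\<close> \<open>r1 \<ge> 0\<close> x(1) by (rule l2norm_resolvent_le)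
  also have "\<dots> \<le> exp (r1 / cmod z) / cmod z"
    using x(2) by (intro mult_left_le) auto
  finally show "l2norm (resolvent z r1 x) \<le> exp (r1 / cmod z) / cmod z" .
  obtain x' where "x' \<in> l2" "l2norm x' = l2norm x"
    and "l2norm (resolvent z r2 x) \<le> l2norm (resolvent z r1 x')"
    using resolvent_dominated_by_aligned[of z r2 r1 x] assms x(1) by auto
  then show "\<exists>x'\<in>l2. l2norm x' \<le> 1 \<and> l2norm (resolvent z r2 x) \<le> l2norm (resolvent z r1 x')"
    using x(2) by (intro bexI[where x = x'] conjI) simp_all
qed

end
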